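(* For every finite zero-set $\mathcal Z$, every integer $k\ge0$ and every $(\alpha,\beta)\in[0,1]^2$, $$I(\alpha,\beta,\mathcal Z)\ge\gamma(\mathcal Z^{\swarrow k})\Big(1-\max(\alpha,\beta)\Big(1+\frac1{k+1}\Big)\Big).$$
   Context: $\mathbb Z_+=\{0,1,2,\dots\}$, $R_{a,b}=([0,a-1]\times[0,b-1])\cap\mathbb Z_+^2$; a zero-set is a union of such rectangles. $\mathrm{row}(x,A),\mathrm{col}(x,A)$ count points of $A$ on the horizontal/vertical line through $x$; $\mathcal T(A)=A\cup\{x\notin A:(\mathrm{row}(x,A),\mathrm{col}(x,A))\notin\mathcal Z\}$; $A$ spans if $\bigcup_t\mathcal T^t(A)=\mathbb Z_+^2$; $\gamma(\mathcal Z)$ is the minimal size of a finite spanning set. $\mathcal Z^{\swarrow k}=\{(u-k,v-k):(u,v)\in\mathcal Z,u\ge k,v\ge k\}$. Large deviation rate: for $\alpha,\beta\ge0$, as $p\to0$ let integers $N,M\to\infty$ with $\log N\sim-\alpha\log p$, $\log M\sim-\beta\log p$; the initial set contains each point of $R_{N,M}$ independently with probability $p$; $I(\alpha,\beta,\mathcal Z)=\lim_{p\to0}\log P_p(\text{initial set spans})/\log p$ (this limit exists). *)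

theory Defs
  imports "HOL-Analysis.Analysis" "HOL-Library.Extended_Nat"
begin

type_synonym pt = "nat \<times> nat"

definition rect :: "nat \<Rightarrow> nat \<Rightarrow> pt set" where
  "rect a b = {(x, y). x < a \<and> y < b}"

definition zero_set :: "pt set \<Rightarrow> bool" where
  "zero_set Z \<longleftrightarrow> (\<exists>S. Z = (\<Union>(a, b)\<in>S. rect a b))"

definition ecount :: "pt set \<Rightarrow> enat" where
  "ecount S = (if finite S then enat (card S) else \<infinity>)"

definition row :: "pt \<Rightarrow> pt set \<Rightarrow> enat" where
  "row x A = ecount {y \<in> A. snd y = snd x}"

definition col :: "pt \<Rightarrow> pt set \<Rightarrow> enat" where
  "col x A = ecount {y \<in> A. fst y = fst x}"

text \<open>Membership of a pair of extended naturals in Z (infinite counts are never in Z).\<close>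
definition in_Z :: "enat \<times> enat \<Rightarrow> pt set \<Rightarrow> bool" where
  "in_Z uv Z \<longleftrightarrow> (\<exists>u v. fst uv = enat u \<and> snd uv = enat v \<and> (u, v) \<in> Z)"

definition T_step :: "pt set \<Rightarrow> pt set \<Rightarrow> pt set" where
  "T_step Z A = A \<union> {x. x \<notin> A \<and> \<not> in_Z (row x A, col x A) Z}"

definition spans :: "pt set \<Rightarrow> pt set \<Rightarrow> bool" where
  "spans Z A \<longleftrightarrow> (\<Union>t. (T_step Z ^^ t) A) = UNIV"

definition gamma :: "pt set \<Rightarrow> nat" where
  "gamma Z = (LEAST n. \<exists>A. finite A \<and> card A = n \<and> spans Z A)"

definition shift_diag :: "pt set \<Rightarrow> nat \<Rightarrow> pt set" where
  "shift_diag Z k = {(u - k, v - k) | u v. (u, v) \<in> Z \<and> u \<ge> k \<and> v \<ge> k}"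

text \<open>P_p(initial p-random subset of R_{N,M} spans).\<close>
definition span_prob :: "pt set \<Rightarrow> real \<Rightarrow> nat \<Rightarrow> nat \<Rightarrow> real" where
  "span_prob Z p N M =
     (\<Sum>A\<in>Pow (rect N M). if spans Z A then p ^ card A * (1 - p) ^ (N * M - card A) else 0)"

definition rate_ratio :: "pt set \<Rightarrow> real \<Rightarrow> nat \<Rightarrow> nat \<Rightarrow> ereal" where
  "rate_ratio Z p N M =
     (if span_prob Z p N M = 0 then \<infinity> else ereal (ln (span_prob Z p N M) / ln p))"

end

theory Submission
  imports Defs
begin

text \<open>If \<open>A\<close> spans for \<open>Z\<close>, discard the points of \<open>A\<close> whose row and column both carry at
  most \<open>k\<close> points of \<open>A\<close>. The discarded set raises every line count by at most \<open>k\<close> throughout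
  the dynamics, so the remaining heavy points span for the shifted zero-set \<open>shift_diag Z k\<close> and
  number at least \<open>\<gamma> = gamma (shift_diag Z k)\<close>. Inside them one finds a covered set \<open>W\<close> (each
  point on a line with more than \<open>k\<close> points of \<open>W\<close>) with \<open>\<gamma> \<le> |W| \<le> \<gamma> (k + 1)\<close>. A covered set
  meets at most \<open>(1 + 1/(k + 1)) |W|\<close> rows and columns, so an \<open>L \<times> L\<close> box contains about
  \<open>L ^ ((1 + 1/(k + 1)) |W|)\<close> of them, and the union bound gives
  \<open>P(span) \<le> C (L ^ (1 + 1/(k + 1)) p) ^ \<gamma>\<close> with \<open>L = max N M \<approx> p ^ (- max \<alpha> \<beta>)\<close>.\<close>

section \<open>Discarding light points of a spanning set\<close>

definition line :: "(pt \<Rightarrow> nat) \<Rightarrow> pt set \<Rightarrow> pt \<Rightarrow> pt set" where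
  "line f A x = {y \<in> A. f y = f x}"

lemma row_eq_ecount_line: "row x A = ecount (line snd A x)"
  by (simp add: row_def line_def)

lemma col_eq_ecount_line: "col x A = ecount (line fst A x)"
  by (simp add: col_def line_def)

definition heavy :: "nat \<Rightarrow> pt set \<Rightarrow> pt set" where
  "heavy k A = {x \<in> A. k < card (line snd A x) \<or> k < card (line fst A x)}"

lemma heavy_subset: "heavy k A \<subseteq> A"
  by (auto simp: heavy_def)

lemma zero_set_downward_closed:
  assumes "zero_set Z" "(u, v) \<in> Z" "u' \<le> u" "v' \<le> v"
  shows "(u', v') \<in> Z"
  using assms unfolding zero_set_def rect_def by fastforce

lemma mem_shift_diag_iff: "(a, b) \<in> shift_diag Z k \<longleftrightarrow> (a + k, b + k) \<in> Z"
  unfolding shift_diag_def by force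

lemma finite_shift_diag: "finite Z \<Longrightarrow> finite (shift_diag Z k)"
  unfolding shift_diag_def
  by (rule finite_subset[of _ "(\<lambda>(u, v). (u - k, v - k)) ` Z"]) force+

lemma in_Z_shift_diag:
  assumes "zero_set Z" "in_Z (r, c) (shift_diag Z k)" "r' \<le> r + enat k" "c' \<le> c + enat k"
  shows "in_Z (r', c') Z"
proof -
  obtain a b where ab: "r = enat a" "c = enat b" "(a + k, b + k) \<in> Z"
    using assms(2) by (auto simp: in_Z_def mem_shift_diag_iff)
  then obtain a' b' where "r' = enat a'" "a' \<le> a + k" "c' = enat b'" "b' \<le> b + k"
    using assms(3,4) by (cases r'; cases c') auto
  with ab show ?thesis
    using zero_set_downward_closed[OF assms(1)] by (auto simp: in_Z_def)
qed

lemma ecount_line_le_add: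
  assumes "A \<subseteq> B \<union> L" "finite L" "card (line f L x) \<le> k"
  shows "ecount (line f A x) \<le> ecount (line f B x) + enat k"
proof (cases "finite (line f B x)")
  case True
  have sub: "line f A x \<subseteq> line f B x \<union> line f L x"
    using assms(1) by (auto simp: line_def)
  have fin: "finite (line f B x \<union> line f L x)"
    using True assms(2) by (simp add: line_def)
  have "card (line f A x) \<le> card (line f B x \<union> line f L x)"
    using card_mono[OF fin sub] .
  also have "\<dots> \<le> card (line f B x) + k"
    using card_Un_le assms(3) by (meson add_left_mono order_trans)
  finally show ?thesis
    using True finite_subset[OF sub fin] by (simp add: ecount_def)
qed (simp add: ecount_def)

text \<open>Points of \<open>L\<close> lie on lines carrying at most \<open>k\<close> of them, so adding \<open>L\<close> raises every line
  count by at most \<open>k\<close>, which the diagonal shift of the zero-set absorbs.\<close>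
lemma T_step_subset_shift_diag:
  assumes Z: "zero_set Z" and sub: "A \<subseteq> B \<union> L" and L: "finite L"
    and sparse: "\<And>x. card (line fst L x) \<le> k" "\<And>x. card (line snd L x) \<le> k"
  shows "T_step Z A \<subseteq> T_step (shift_diag Z k) B \<union> L"
proof
  fix x assume x: "x \<in> T_step Z A"
  show "x \<in> T_step (shift_diag Z k) B \<union> L"
  proof (cases "x \<in> A")
    case False
    with x have "\<not> in_Z (row x A, col x A) Z"
      by (simp add: T_step_def)
    moreover have "row x A \<le> row x B + enat k" "col x A \<le> col x B + enat k"
      using ecount_line_le_add[OF sub L] sparse
      by (simp_all add: row_eq_ecount_line col_eq_ecount_line)
    ultimately have "\<not> in_Z (row x B, col x B) (shift_diag Z k)"
      using in_Z_shift_diag[OF Z] by blast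
    then show ?thesis
      by (auto simp: T_step_def)
  qed (use sub in \<open>auto simp: T_step_def\<close>)
qed

lemma T_step_iter_subset_shift_diag:
  assumes "zero_set Z" "A \<subseteq> B \<union> L" "finite L"
    and "\<And>x. card (line fst L x) \<le> k" "\<And>x. card (line snd L x) \<le> k"
  shows "(T_step Z ^^ t) A \<subseteq> (T_step (shift_diag Z k) ^^ t) B \<union> L"
proof (induction t)
  case (Suc t)
  then show ?case
    using T_step_subset_shift_diag[OF assms(1) Suc assms(3-5)] by simp
qed (simp add: assms(2))

lemma incseq_T_step_iter: "incseq (\<lambda>t. (T_step Z ^^ t) A)"
  by (rule incseq_SucI) (auto simp: T_step_def)

lemma finite_subset_UN_incseq:
  assumes "incseq C" "finite F" "F \<subseteq> (\<Union>t. C t)"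
  obtains t where "F \<subseteq> C t"
proof -
  have "C m \<subseteq> C n \<or> C n \<subseteq> C m" for m n
    using assms(1) by (metis incseq_def nle_le)
  then have "subset.chain UNIV (range C)"
    by (auto simp: subset.chain_def)
  moreover have "F \<subseteq> \<Union> (range C)" "range C \<noteq> {}"
    using assms(3) by auto
  ultimately obtain B where "B \<in> range C" "F \<subseteq> B"
    using finite_subset_Union_chain[OF assms(2)] by metis
  then show ?thesis
    using that by blast
qed

text \<open>Since \<open>Z\<close> is bounded, a row with many infected points is infected; as each row is infinite,
  this eventually happens on the rows through the finitely many remaining points.\<close>
lemma spans_if_closure_cofinite:
  assumes "finite Z" "finite L" "- L \<subseteq> (\<Union>t. (T_step Z ^^ t) B)"
  shows "spans Z B"
proof -
  define C where "C t = (T_step Z ^^ t) B" for t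
  obtain D where "fst ` Z \<subseteq> {..<D}"
    using finite_nat_bounded[OF finite_imageI[OF assms(1)]] by blast
  then have D: "\<And>a b. (a, b) \<in> Z \<Longrightarrow> a < D"
    by force
  have infected: "x \<in> C (Suc t)" if F: "finite F" "card F = D" "F \<subseteq> line snd (C t) x" for x t F
  proof -
    have "\<not> in_Z (row x (C t), col x (C t)) Z"
    proof
      assume "in_Z (row x (C t), col x (C t)) Z"
      then obtain a b where "row x (C t) = enat a" "(a, b) \<in> Z"
        by (auto simp: in_Z_def)
      then have "finite (line snd (C t) x)" "card (line snd (C t) x) < D"
        using D by (auto simp: row_eq_ecount_line ecount_def split: if_splits)
      then show False
        using card_mono[OF _ F(3)] F(2) by simp
    qed
    then show ?thesis
      by (auto simp: C_def T_step_def)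
  qed
  have "x \<in> (\<Union>t. C t)" if "x \<in> L" for x
  proof -
    have "inj (\<lambda>i :: nat. (i, snd x))"
      by (rule injI) simp
    then have "infinite (range (\<lambda>i :: nat. (i, snd x)))"
      by (rule range_inj_infinite)
    then have "infinite {y :: pt. snd y = snd x}"
      by (rule infinite_super[rotated]) auto
    then have "infinite ({y. snd y = snd x} - L)"
      using assms(2) by simp
    then obtain F where F: "finite F" "card F = D" "F \<subseteq> {y. snd y = snd x} - L"
      using infinite_arbitrarily_large by blast
    moreover obtain t where "F \<subseteq> C t"
      using finite_subset_UN_incseq[OF incseq_T_step_iter F(1)] F(3) assms(3)
      unfolding C_def by blast
    ultimately have "x \<in> C (Suc t)"
      by (intro infected[of F]) (auto simp: line_def)
    then show ?thesis by blast
  qed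
  with assms(3) show ?thesis
    unfolding spans_def C_def by blast
qed

lemma card_line_Diff_heavy:
  assumes "finite A" "f = fst \<or> f = snd"
  shows "card (line f (A - heavy k A) x) \<le> k"
proof (cases "line f (A - heavy k A) x = {}")
  case False
  then obtain y where y: "y \<in> A - heavy k A" "f y = f x"
    by (auto simp: line_def)
  then have "card (line f (A - heavy k A) x) \<le> card (line f A y)"
    using assms(1) by (intro card_mono) (auto simp: line_def)
  also have "\<dots> \<le> k"
    using y assms(2) by (auto simp: heavy_def)
  finally show ?thesis .
qed simp

lemma spans_shift_diag_heavy:
  assumes "zero_set Z" "finite Z" "finite A" "spans Z A"
  shows "spans (shift_diag Z k) (heavy k A)"
proof (rule spans_if_closure_cofinite)
  let ?L = "A - heavy k A"
  show "- ?L \<subseteq> (\<Union>t. (T_step (shift_diag Z k) ^^ t) (heavy k A))"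
  proof
    fix x assume x: "x \<in> - ?L"
    from assms(4) obtain t where "x \<in> (T_step Z ^^ t) A"
      by (auto simp: spans_def)
    moreover have "(T_step Z ^^ t) A \<subseteq> (T_step (shift_diag Z k) ^^ t) (heavy k A) \<union> ?L"
      using assms(1,3) card_line_Diff_heavy by (intro T_step_iter_subset_shift_diag) auto
    ultimately show "x \<in> (\<Union>t. (T_step (shift_diag Z k) ^^ t) (heavy k A))"
      using x by blast
  qed
qed (simp_all add: assms finite_shift_diag)

lemma gamma_shift_diag_le_card_heavy:
  assumes "zero_set Z" "finite Z" "finite A" "spans Z A"
  shows "gamma (shift_diag Z k) \<le> card (heavy k A)"
  unfolding gamma_def using spans_shift_diag_heavy[OF assms] assms(3)
  by (intro Least_le exI[of _ "heavy k A"]) (simp add: finite_subset[OF heavy_subset])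

section \<open>Covered sets\<close>

definition covered :: "nat \<Rightarrow> pt set \<Rightarrow> bool" where
  "covered k W \<longleftrightarrow> W \<subseteq> heavy k W"

lemma heavy_mono:
  assumes "finite B" "A \<subseteq> B"
  shows "heavy k A \<subseteq> heavy k B"
proof
  fix x assume x: "x \<in> heavy k A"
  have "card (line f A x) \<le> card (line f B x)" for f
    using assms by (intro card_mono) (auto simp: line_def)
  with x assms(2) show "x \<in> heavy k B"
    unfolding heavy_def by (auto intro: less_le_trans)
qed

lemma covered_Un:
  assumes "finite (V \<union> W)" "covered k V" "covered k W"
  shows "covered k (V \<union> W)"
  using heavy_mono[OF assms(1), of V k] heavy_mono[OF assms(1), of W k] assms(2,3)
  unfolding covered_def by blast

lemma card_line_heavy_gt:
  assumes "finite A" "f = fst \<or> f = snd" "k < card (line f A x)"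
  shows "k < card (line f (heavy k A) x)"
proof -
  have sub: "line f A x \<subseteq> line f (heavy k A) x"
  proof
    fix y assume y: "y \<in> line f A x"
    then have "line f A y = line f A x"
      by (auto simp: line_def)
    with y assms(2,3) show "y \<in> line f (heavy k A) x"
      by (auto simp: line_def heavy_def)
  qed
  have "finite (line f (heavy k A) x)"
    using assms(1) by (simp add: line_def heavy_def)
  with assms(3) sub show ?thesis
    by (meson card_mono less_le_trans)
qed

lemma covered_heavy:
  assumes "finite A"
  shows "covered k (heavy k A)"
  unfolding covered_def
proof
  fix x assume x: "x \<in> heavy k A"
  then have "k < card (line snd A x) \<or> k < card (line fst A x)"
    by (simp add: heavy_def)
  then have "k < card (line snd (heavy k A) x) \<or> k < card (line fst (heavy k A) x)"
    using card_line_heavy_gt[OF assms] by blast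
  with x show "x \<in> heavy k (heavy k A)"
    by (simp add: heavy_def)
qed

lemma covered_if_collinear:
  assumes "finite S" "k < card S" "f = fst \<or> f = snd" "\<And>y. y \<in> S \<Longrightarrow> f y = c"
  shows "covered k S"
proof -
  have "line f S y = S" if "y \<in> S" for y
    using assms(4) that by (auto simp: line_def)
  with assms(2,3) show ?thesis
    by (auto simp: covered_def heavy_def)
qed

lemma covered_subset_through_point:
  assumes "finite B" "covered k B" "x \<in> B"
  obtains S where "S \<subseteq> B" "x \<in> S" "card S = Suc k" "covered k S"
proof -
  obtain f where f: "f = fst \<or> f = snd" "k < card (line f B x)"
    using assms(2,3) by (auto simp: covered_def heavy_def)
  have fin: "finite (line f B x)"
    using assms(1) by (simp add: line_def)
  have "k \<le> card (line f B x - {x})"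
    using f(2) assms(3) fin by (simp add: line_def)
  then obtain S where S: "S \<subseteq> line f B x - {x}" "card S = k"
    by (meson obtain_subset_with_card_n)
  have fin_xS: "finite (insert x S)"
    using S(1) fin finite_subset by blast
  moreover have "x \<notin> S"
    using S(1) by blast
  ultimately have card_xS: "card (insert x S) = Suc k"
    using S(2) by simp
  have collinear: "f y = f x" if "y \<in> insert x S" for y
    using S(1) that by (auto simp: line_def)
  have "covered k (insert x S)"
    using covered_if_collinear[OF fin_xS _ f(1) collinear] card_xS by simp
  moreover have "insert x S \<subseteq> B"
    using S(1) assms(3) unfolding line_def by blast
  ultimately show ?thesis
    using that card_xS by blast
qed

text \<open>Greedily adding, for each uncovered point, \<open>k + 1\<close> points of a heavy line through it.\<close>
lemma covered_subset_card_between: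
  assumes "finite B" "covered k B"
  shows "n \<le> card B \<Longrightarrow> \<exists>W \<subseteq> B. covered k W \<and> n \<le> card W \<and> card W \<le> n * Suc k"
proof (induction n)
  case 0
  show ?case
    by (intro exI[of _ "{}"]) (simp add: covered_def)
next
  case (Suc n)
  then obtain W where W: "W \<subseteq> B" "covered k W" "n \<le> card W" "card W \<le> n * Suc k"
    by auto
  have fin: "finite W"
    using W(1) assms(1) finite_subset by blast
  show ?case
  proof (cases "Suc n \<le> card W")
    case True
    have "card W \<le> Suc n * Suc k"
      using W(4) by (simp add: add_increasing)
    with True W(1,2) show ?thesis
      by blast
  next
    case False
    with W(3) have "card W < card B"
      using Suc.prems by simp
    then have "\<not> B \<subseteq> W"
      using card_mono[OF fin] by (meson not_le)
    then obtain x where x: "x \<in> B" "x \<notin> W"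
      by blast
    obtain S where S: "S \<subseteq> B" "x \<in> S" "card S = Suc k" "covered k S"
      using covered_subset_through_point[OF assms x(1)] .
    have fin': "finite (W \<union> S)"
      using W(1) S(1) assms(1) finite_subset by blast
    have "card (insert x W) \<le> card (W \<union> S)"
      using S(2) fin' by (intro card_mono) auto
    moreover have "card (W \<union> S) \<le> card W + card S"
      by (rule card_Un_le)
    ultimately have "Suc n \<le> card (W \<union> S)" "card (W \<union> S) \<le> Suc n * Suc k"
      using False W(3,4) S(3) x(2) fin by auto
    with W S fin' show ?thesis
      by (intro exI[of _ "W \<union> S"]) (auto intro: covered_Un)
  qed
qed

text \<open>Each row contributes at least \<open>k + 1\<close>: a heavy row through its \<open>k + 1\<close> points of weight \<open>1\<close>,
  a light row through one point of weight \<open>k + 1\<close>.\<close>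
lemma card_image_le_sum_line_weights:
  assumes "finite W"
  shows "Suc k * card (f ` W) \<le> (\<Sum>w\<in>W. if k < card (line f W w) then 1 else Suc k)"
proof -
  let ?g = "\<lambda>w. if k < card (line f W w) then 1 else Suc k"
  have line_bound: "Suc k \<le> sum ?g (line f W w)" if w: "w \<in> W" for w
  proof -
    have "?g v = ?g w" if "v \<in> line f W w" for v
      using that by (simp add: line_def)
    then have "sum ?g (line f W w) = card (line f W w) * ?g w"
      by simp
    moreover have "w \<in> line f W w" "finite (line f W w)"
      using w assms by (simp_all add: line_def)
    then have "0 < card (line f W w)"
      using card_gt_0_iff by blast
    ultimately show ?thesis
    proof (cases "k < card (line f W w)")
      case False
      with \<open>0 < card (line f W w)\<close> have "1 * Suc k \<le> card (line f W w) * ?g w"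
        by (simp only: if_False) (intro mult_le_mono1, simp)
      with \<open>sum ?g (line f W w) = card (line f W w) * ?g w\<close> show ?thesis
        by simp
    qed simp
  qed
  have "(\<Sum>y\<in>f ` W. Suc k) \<le> (\<Sum>y\<in>f ` W. sum ?g {w \<in> W. f w = y})"
  proof (rule sum_mono)
    fix y assume "y \<in> f ` W"
    then obtain w where "w \<in> W" "y = f w"
      by blast
    then show "Suc k \<le> sum ?g {w \<in> W. f w = y}"
      using line_bound[of w] by (simp only: line_def)
  qed
  also have "\<dots> = sum ?g W"
    by (rule sum.image_gen[symmetric, OF assms])
  finally show ?thesis
    by (simp add: mult.commute)
qed

lemma covered_card_projections_le:
  assumes "finite W" "covered k W"
  shows "Suc k * (card (fst ` W) + card (snd ` W)) \<le> (k + 2) * card W"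
proof -
  let ?wt = "\<lambda>f w. if k < card (line f W w) then 1 else Suc k"
  have "Suc k * (card (fst ` W) + card (snd ` W))
      = Suc k * card (fst ` W) + Suc k * card (snd ` W)"
    by (rule add_mult_distrib2)
  also have "\<dots> \<le> sum (?wt fst) W + sum (?wt snd) W"
    by (intro add_mono card_image_le_sum_line_weights[OF assms(1)])
  also have "\<dots> = (\<Sum>w\<in>W. ?wt fst w + ?wt snd w)"
    by (rule sum.distrib[symmetric])
  also have "\<dots> \<le> (\<Sum>w\<in>W. k + 2)"
  proof (rule sum_mono)
    fix w assume "w \<in> W"
    with assms(2) have "k < card (line snd W w) \<or> k < card (line fst W w)"
      unfolding covered_def heavy_def by blast
    then show "?wt fst w + ?wt snd w \<le> k + 2"
      by auto
  qed
  also have "\<dots> = (k + 2) * card W"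
    by simp
  finally show ?thesis .
qed

section \<open>The union bound\<close>

lemma sum_Pow_binomial:
  fixes p q :: "'a :: comm_semiring_1"
  assumes "finite D"
  shows "(\<Sum>C\<in>Pow D. p ^ card C * q ^ (card D - card C)) = (p + q) ^ card D"
proof -
  have "(p + q) ^ card D = (\<Sum>C\<in>Pow D. p ^ card C * q ^ card (D - C))"
    by (subst prod_constant[symmetric], subst prod_add[OF assms]) simp
  also have "\<dots> = (\<Sum>C\<in>Pow D. p ^ card C * q ^ (card D - card C))"
    using assms by (intro sum.cong) (auto simp: card_Diff_subset finite_subset)
  finally show ?thesis ..
qed

lemma sum_supersets_binomial:
  fixes p q :: "'a :: comm_semiring_1"
  assumes R: "finite R" and W: "W \<subseteq> R"
  shows "(\<Sum>A\<in>{A\<in>Pow R. W \<subseteq> A}. p ^ card A * q ^ (card R - card A))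
    = p ^ card W * (p + q) ^ (card R - card W)"
proof -
  have fW: "finite W"
    using R W finite_subset by blast
  have inj: "inj_on (\<lambda>C. W \<union> C) (Pow (R - W))"
    unfolding inj_on_def by blast
  have img: "(\<lambda>C. W \<union> C) ` Pow (R - W) = {A\<in>Pow R. W \<subseteq> A}"
  proof
    show "{A\<in>Pow R. W \<subseteq> A} \<subseteq> (\<lambda>C. W \<union> C) ` Pow (R - W)"
    proof
      fix A assume "A \<in> {A\<in>Pow R. W \<subseteq> A}"
      then have "A = W \<union> (A - W)" "A - W \<in> Pow (R - W)"
        by auto
      then show "A \<in> (\<lambda>C. W \<union> C) ` Pow (R - W)"
        by blast
    qed
  qed (use W in auto)
  have card_RW: "card (R - W) = card R - card W"
    using card_Diff_subset[OF fW W] .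
  have "(\<Sum>A\<in>{A\<in>Pow R. W \<subseteq> A}. p ^ card A * q ^ (card R - card A))
      = (\<Sum>C\<in>Pow (R - W). p ^ card (W \<union> C) * q ^ (card R - card (W \<union> C)))"
    unfolding img[symmetric] by (rule sum.reindex[OF inj, unfolded comp_def])
  also have "\<dots> = (\<Sum>C\<in>Pow (R - W). p ^ card W * (p ^ card C * q ^ (card (R - W) - card C)))"
  proof (rule sum.cong[OF refl])
    fix C assume C: "C \<in> Pow (R - W)"
    then have "finite C" "card C \<le> card (R - W)"
      using R finite_subset by (auto intro: card_mono)
    moreover have "card (W \<union> C) = card W + card C"
      using C fW \<open>finite C\<close> by (intro card_Un_disjoint) auto
    ultimately show "p ^ card (W \<union> C) * q ^ (card R - card (W \<union> C))
        = p ^ card W * (p ^ card C * q ^ (card (R - W) - card C))"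
      using card_RW by (simp add: power_add mult.assoc)
  qed
  also have "\<dots> = p ^ card W * (p + q) ^ (card R - card W)"
    using sum_Pow_binomial[of "R - W" p q] R card_RW by (simp add: sum_distrib_left[symmetric])
  finally show ?thesis .
qed

lemma finite_rect: "finite (rect N M)"
  and card_rect: "card (rect N M) = N * M"
proof -
  have "rect N M = {..<N} \<times> {..<M}"
    by (auto simp: rect_def)
  then show "finite (rect N M)" "card (rect N M) = N * M"
    by (simp_all add: card_cartesian_product)
qed

lemma spanning_set_contains_covered:
  assumes "zero_set Z" "finite Z" "finite A" "spans Z A"
  shows "\<exists>W \<subseteq> A. covered k W \<and> gamma (shift_diag Z k) \<le> card W
           \<and> card W \<le> gamma (shift_diag Z k) * Suc k"
proof -
  have "finite (heavy k A)"
    using assms(3) finite_subset[OF heavy_subset] by blast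
  from covered_subset_card_between[OF this covered_heavy[OF assms(3)]
      gamma_shift_diag_le_card_heavy[OF assms]]
  show ?thesis
    using heavy_subset by blast
qed

lemma span_prob_le_sum_covered:
  fixes k :: nat
  assumes "zero_set Z" "finite Z" "0 \<le> p" "p \<le> 1"
  defines "g \<equiv> gamma (shift_diag Z k)"
  shows "span_prob Z p N M \<le>
    (\<Sum>W\<in>{W\<in>Pow (rect N M). covered k W \<and> g \<le> card W \<and> card W \<le> g * Suc k}. p ^ card W)"
proof -
  define R where "R = rect N M"
  define WW where "WW = {W\<in>Pow R. covered k W \<and> g \<le> card W \<and> card W \<le> g * Suc k}"
  define w where "w A = p ^ card A * (1 - p) ^ (card R - card A)" for A :: "pt set"
  have fin: "finite R" "finite WW"
    by (simp_all add: R_def WW_def finite_rect)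
  have w_nonneg: "0 \<le> w A" for A
    using assms(3,4) by (simp add: w_def)
  have "span_prob Z p N M = (\<Sum>A\<in>Pow R. if spans Z A then w A else 0)"
    unfolding span_prob_def w_def R_def card_rect ..
  also have "\<dots> \<le> (\<Sum>A\<in>Pow R. \<Sum>W\<in>{W\<in>WW. W \<subseteq> A}. w A)"
  proof (rule sum_mono)
    fix A assume A: "A \<in> Pow R"
    show "(if spans Z A then w A else 0) \<le> (\<Sum>W\<in>{W\<in>WW. W \<subseteq> A}. w A)"
    proof (cases "spans Z A")
      case True
      moreover have "finite A"
        using A fin(1) finite_subset by blast
      ultimately obtain W where "W \<subseteq> A" "covered k W" "g \<le> card W" "card W \<le> g * Suc k"
        using spanning_set_contains_covered[OF assms(1,2)] unfolding g_def by blast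
      with A have "W \<in> {W\<in>WW. W \<subseteq> A}"
        by (auto simp: WW_def)
      then have "w A \<le> (\<Sum>W\<in>{W\<in>WW. W \<subseteq> A}. w A)"
        using fin(2) w_nonneg by (intro member_le_sum) auto
      with True show ?thesis
        by simp
    qed (simp add: sum_nonneg w_nonneg)
  qed
  also have "\<dots> = (\<Sum>W\<in>WW. \<Sum>A\<in>{A\<in>Pow R. W \<subseteq> A}. w A)"
    using fin by (subst sum.swap_restrict) auto
  also have "\<dots> = (\<Sum>W\<in>WW. p ^ card W)"
    using sum_supersets_binomial[OF fin(1), of _ p "1 - p"] by (intro sum.cong) (auto simp: WW_def w_def)
  finally show ?thesis
    unfolding WW_def R_def .
qed

section \<open>Counting covered sets\<close>

lemma sum_inverse_power_card_small_subsets_le: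
  fixes L :: real
  assumes "1 \<le> L" "real n \<le> L"
  shows "(\<Sum>X\<in>{X\<in>Pow {..<n}. card X \<le> G}. (1 / L) ^ card X) \<le> real G + 1"
proof -
  define XX where "XX = {X\<in>Pow {..<n}. card X \<le> G}"
  have "(\<Sum>X\<in>XX. (1 / L) ^ card X) = (\<Sum>j\<le>G. \<Sum>X\<in>{X\<in>XX. card X = j}. (1 / L) ^ card X)"
    by (rule sum.group[symmetric]) (auto simp: XX_def)
  also have "\<dots> \<le> (\<Sum>j\<le>G. 1)"
  proof (rule sum_mono)
    fix j assume "j \<in> {..G}"
    then have "{X\<in>XX. card X = j} = {X. X \<subseteq> {..<n} \<and> card X = j}"
      by (auto simp: XX_def)
    then have "(\<Sum>X\<in>{X\<in>XX. card X = j}. (1 / L) ^ card X) = real (n choose j) * (1 / L) ^ j"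
      using n_subsets[of "{..<n}" j] by simp
    also have "\<dots> \<le> real n ^ j * (1 / L) ^ j"
    proof (intro mult_right_mono)
      show "real (n choose j) \<le> real n ^ j"
        by (cases "j \<le> n") (simp_all add: binomial_le_pow binomial_eq_0 flip: of_nat_power)
    qed (use assms(1) in simp)
    also have "\<dots> \<le> L ^ j * (1 / L) ^ j"
      using assms by (intro mult_right_mono power_mono) auto
    also have "\<dots> = 1"
      using assms(1) by (simp add: power_one_over)
    finally show "(\<Sum>X\<in>{X\<in>XX. card X = j}. (1 / L) ^ card X) \<le> 1" .
  qed
  finally show ?thesis
    by (simp add: XX_def)
qed

text \<open>A set of size at most \<open>G\<close> is determined up to \<open>2 ^ (G * G)\<close> choices by its two projections,
  subsets of \<open>{..<N}\<close> and \<open>{..<M}\<close> of size at most \<open>G\<close>.\<close>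
lemma sum_inverse_power_card_projections_le:
  fixes L :: real
  assumes L: "1 \<le> L" and N: "real N \<le> L" and M: "real M \<le> L"
  shows "(\<Sum>W\<in>{W\<in>Pow (rect N M). card W \<le> G}. (1 / L) ^ (card (fst ` W) + card (snd ` W)))
    \<le> 2 ^ (G * G) * (real G + 1) ^ 2"
proof -
  define WW where "WW = {W\<in>Pow (rect N M). card W \<le> G}"
  define XX where "XX = {X\<in>Pow {..<N}. card X \<le> G}"
  define YY where "YY = {Y\<in>Pow {..<M}. card Y \<le> G}"
  define proj where "proj W = (fst ` W, snd ` W)" for W :: "pt set"
  define h where "h z = (1 / L) ^ card (fst z) * (1 / L) ^ card (snd z)" for z :: "nat set \<times> nat set"
  have fin: "finite WW" "finite (XX \<times> YY)"
    by (simp_all add: WW_def XX_def YY_def finite_rect)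
  have proj_WW: "proj ` WW \<subseteq> XX \<times> YY"
  proof
    fix z assume "z \<in> proj ` WW"
    then obtain W where W: "W \<in> WW" "z = proj W"
      by blast
    then have "finite W" "card W \<le> G" "W \<subseteq> rect N M"
      using finite_subset[OF _ finite_rect] by (auto simp: WW_def)
    then show "z \<in> XX \<times> YY"
      using card_image_le[of W fst] card_image_le[of W snd]
      by (auto simp: W(2) proj_def XX_def YY_def rect_def)
  qed
  have fibre: "real (card {W\<in>WW. proj W = (X, Y)}) \<le> 2 ^ (G * G)" if "(X, Y) \<in> XX \<times> YY" for X Y
  proof -
    have XY: "X \<subseteq> {..<N}" "Y \<subseteq> {..<M}" "card X \<le> G" "card Y \<le> G"
      using that by (auto simp: XX_def YY_def)
    then have fin_XY: "finite X" "finite Y"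
      by (simp_all add: finite_subset)
    have "{W\<in>WW. proj W = (X, Y)} \<subseteq> Pow (X \<times> Y)"
      by (auto simp: proj_def) (metis fst_conv snd_conv image_eqI)+
    then have "card {W\<in>WW. proj W = (X, Y)} \<le> card (Pow (X \<times> Y))"
      by (rule card_mono[rotated]) (simp add: fin_XY)
    also have "\<dots> = 2 ^ (card X * card Y)"
      by (simp add: card_Pow card_cartesian_product fin_XY)
    also have "\<dots> \<le> 2 ^ (G * G)"
      using XY(3,4) by (intro power_increasing mult_le_mono) simp_all
    finally have "real (card {W\<in>WW. proj W = (X, Y)}) \<le> real (2 ^ (G * G))"
      by (rule of_nat_mono)
    then show ?thesis
      by simp
  qed
  have "(\<Sum>W\<in>WW. (1 / L) ^ (card (fst ` W) + card (snd ` W))) = (\<Sum>W\<in>WW. h (proj W))"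
    by (simp add: h_def proj_def power_add)
  also have "\<dots> = (\<Sum>z\<in>XX \<times> YY. \<Sum>W\<in>{W\<in>WW. proj W = z}. h (proj W))"
    by (rule sum.group[symmetric, OF fin proj_WW])
  also have "\<dots> = (\<Sum>z\<in>XX \<times> YY. real (card {W\<in>WW. proj W = z}) * h z)"
    by (intro sum.cong) auto
  also have "\<dots> \<le> (\<Sum>z\<in>XX \<times> YY. 2 ^ (G * G) * h z)"
    using L fibre by (intro sum_mono mult_right_mono) (auto simp: h_def split: prod.splits)
  also have "\<dots> = 2 ^ (G * G) * ((\<Sum>X\<in>XX. (1 / L) ^ card X) * (\<Sum>Y\<in>YY. (1 / L) ^ card Y))"
  proof -
    have "(\<Sum>X\<in>XX. \<Sum>Y\<in>YY. (1 / L) ^ card X * (1 / L) ^ card Y) = (\<Sum>z\<in>XX \<times> YY. h z)"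
      by (subst sum.cartesian_product) (simp add: h_def case_prod_beta)
    then show ?thesis
      by (simp add: sum_distrib_left[symmetric] sum_product)
  qed
  also have "\<dots> \<le> 2 ^ (G * G) * ((real G + 1) * (real G + 1))"
    using sum_inverse_power_card_small_subsets_le[OF L N, of G]
      sum_inverse_power_card_small_subsets_le[OF L M, of G] L
    by (intro mult_left_mono mult_mono) (auto simp: XX_def YY_def intro!: sum_nonneg)
  finally show ?thesis
    by (simp add: WW_def power2_eq_square)
qed

lemma power_le_add_powers:
  fixes x :: real
  assumes "0 < x" "g \<le> u" "u \<le> G"
  shows "x ^ u \<le> x ^ g + x ^ G"
proof (cases "x \<le> 1")
  case True
  then have "x ^ u \<le> x ^ g"
    using assms by (intro power_decreasing) auto
  then show ?thesis
    using assms(1) by (simp add: add_increasing2)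
next
  case False
  then have "x ^ u \<le> x ^ G"
    using assms by (intro power_increasing) auto
  then show ?thesis
    using assms(1) by (simp add: add_increasing)
qed

lemma power_card_le_covered:
  fixes L p :: real
  assumes L: "1 \<le> L" and p: "0 < p" and W: "finite W" "covered k W" "g \<le> card W" "card W \<le> G"
  defines "x \<equiv> L powr (1 + 1 / (real k + 1)) * p"
  shows "p ^ card W \<le> (x ^ g + x ^ G) * (1 / L) ^ (card (fst ` W) + card (snd ` W))"
proof -
  define c where "c = 1 + 1 / (real k + 1)"
  define u r where "u = card W" and "r = card (fst ` W) + card (snd ` W)"
  have "real (Suc k) * real r \<le> real (k + 2) * real u"
    using covered_card_projections_le[OF W(1,2)] unfolding u_def r_def
    by (metis of_nat_le_iff of_nat_mult)
  then have "real r \<le> c * real u"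
    unfolding c_def by (simp add: field_simps)
  then have "L powr (- (c * u)) \<le> (1 / L) ^ r"
    using L powr_mono[of "- (c * u)" "- real r" L]
    by (simp add: powr_minus powr_realpow power_one_over inverse_eq_divide)
  have "p ^ u = x ^ u * L powr (- (c * u))"
    using L by (simp add: x_def c_def power_mult_distrib powr_power powr_minus field_simps)
  also have "\<dots> \<le> x ^ u * (1 / L) ^ r"
    using \<open>L powr (- (c * u)) \<le> (1 / L) ^ r\<close> L p by (intro mult_left_mono) (auto simp: x_def)
  also have "\<dots> \<le> (x ^ g + x ^ G) * (1 / L) ^ r"
    using power_le_add_powers[of x g u G] L p W(3,4) by (intro mult_right_mono) (auto simp: x_def u_def)
  finally show ?thesis
    unfolding u_def r_def .
qed

lemma sum_covered_le:
  fixes k :: nat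
  and L p :: real
  assumes L: "1 \<le> L" "real N \<le> L" "real M \<le> L" and p: "0 < p"
  defines "x \<equiv> L powr (1 + 1 / (real k + 1)) * p"
  shows "(\<Sum>W\<in>{W\<in>Pow (rect N M). covered k W \<and> g \<le> card W \<and> card W \<le> G}. p ^ card W)
    \<le> (x ^ g + x ^ G) * (2 ^ (G * G) * (real G + 1) ^ 2)"
proof -
  let ?WW = "{W\<in>Pow (rect N M). covered k W \<and> g \<le> card W \<and> card W \<le> G}"
  let ?h = "\<lambda>W. (1 / L) ^ (card (fst ` W) + card (snd ` W))"
  have "0 \<le> x"
    using L p by (simp add: x_def)
  have "(\<Sum>W\<in>?WW. p ^ card W) \<le> (\<Sum>W\<in>?WW. (x ^ g + x ^ G) * ?h W)"
    using L p finite_subset[OF _ finite_rect]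
    by (intro sum_mono) (auto simp: x_def intro!: power_card_le_covered)
  also have "\<dots> = (x ^ g + x ^ G) * (\<Sum>W\<in>?WW. ?h W)"
    by (simp add: sum_distrib_left)
  also have "\<dots> \<le> (x ^ g + x ^ G) * (\<Sum>W\<in>{W\<in>Pow (rect N M). card W \<le> G}. ?h W)"
    using L \<open>0 \<le> x\<close> by (intro mult_left_mono sum_mono2) (auto simp: finite_rect)
  also have "\<dots> \<le> (x ^ g + x ^ G) * (2 ^ (G * G) * (real G + 1) ^ 2)"
    using sum_inverse_power_card_projections_le[OF L] \<open>0 \<le> x\<close> by (intro mult_left_mono) auto
  finally show ?thesis .
qed

lemma span_prob_le_power_bound:
  fixes k :: nat and L p :: real
  assumes "zero_set Z" "finite Z" "0 < p" "p \<le> 1" "1 \<le> L" "real N \<le> L" "real M \<le> L"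
  defines "g \<equiv> gamma (shift_diag Z k)" and "x \<equiv> L powr (1 + 1 / (real k + 1)) * p"
  shows "span_prob Z p N M
    \<le> (x ^ g + x ^ (g * Suc k)) * (2 ^ (g * Suc k * (g * Suc k)) * (real (g * Suc k) + 1) ^ 2)"
proof -
  have "span_prob Z p N M \<le>
      (\<Sum>W\<in>{W\<in>Pow (rect N M). covered k W \<and> g \<le> card W \<and> card W \<le> g * Suc k}. p ^ card W)"
    unfolding g_def by (rule span_prob_le_sum_covered) (use assms in auto)
  also have "\<dots> \<le> (x ^ g + x ^ (g * Suc k)) * (2 ^ (g * Suc k * (g * Suc k)) * (real (g * Suc k) + 1) ^ 2)"
    unfolding x_def by (rule sum_covered_le) (use assms in auto)
  finally show ?thesis .
qed

section \<open>Asymptotics\<close>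

lemma eventually_at_right_0_1: "\<forall>\<^sub>F p in at_right 0. 0 < p \<and> p < (1 :: real)"
  using eventually_at_right_real[of 0 1] by simp

lemma span_prob_nonneg:
  assumes "0 \<le> p" "p \<le> 1"
  shows "0 \<le> span_prob Z p N M"
  unfolding span_prob_def using assms by (intro sum_nonneg) auto

lemma span_prob_le_1:
  assumes "0 \<le> p" "p \<le> 1"
  shows "span_prob Z p N M \<le> 1"
proof -
  have "span_prob Z p N M
      \<le> (\<Sum>A\<in>Pow (rect N M). p ^ card A * (1 - p) ^ (card (rect N M) - card A))"
    unfolding span_prob_def card_rect using assms by (intro sum_mono) auto
  also have "\<dots> = 1"
    using sum_Pow_binomial[OF finite_rect, of p "1 - p"] by simp
  finally show ?thesis .
qed

lemma rate_ratio_nonneg: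
  assumes "0 < p" "p < 1"
  shows "0 \<le> rate_ratio Z p N M"
proof (cases "span_prob Z p N M = 0")
  case False
  then have "0 < span_prob Z p N M"
    using span_prob_nonneg[of p Z N M] assms by simp
  then have "ln (span_prob Z p N M) \<le> 0"
    using span_prob_le_1[of p Z N M] assms by simp
  with assms have "0 \<le> ln (span_prob Z p N M) / ln p"
    by (simp add: divide_nonpos_neg)
  with False show ?thesis
    by (simp add: rate_ratio_def)
qed (simp add: rate_ratio_def)

lemma Liminf_rate_ratio_nonneg: "0 \<le> Liminf (at_right 0) (\<lambda>p. rate_ratio Z p (N p) (M p))"
proof (rule Liminf_bounded)
  show "\<forall>\<^sub>F p in at_right 0. 0 \<le> rate_ratio Z p (N p) (M p)"
    using eventually_at_right_0_1 by eventually_elim (simp add: rate_ratio_nonneg)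
qed

lemma ln_ratio_ge_of_le_power:
  fixes p y P C :: real
  assumes "0 < p" "p < 1" "0 < C" "0 < y" "0 < P" "P \<le> C * y ^ g"
  shows "ln C / ln p + real g * (ln y / ln p) \<le> ln P / ln p"
proof -
  have "ln P \<le> ln (C * y ^ g)"
    using assms by simp
  also have "\<dots> = ln C + real g * ln y"
    using assms by (simp add: ln_mult ln_realpow)
  finally have "(ln C + real g * ln y) / ln p \<le> ln P / ln p"
    using assms(1,2) by (simp add: divide_right_mono_neg)
  then show ?thesis
    by (simp add: add_divide_distrib)
qed

lemma Liminf_ln_ratio_ge:
  fixes P y :: "real \<Rightarrow> real" and C e :: real
  assumes C: "0 < C" and e: "0 < e" and "g \<le> G"
    and y: "((\<lambda>p. ln (y p) / ln p) \<longlongrightarrow> e) (at_right 0)"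
    and P: "\<forall>\<^sub>F p in at_right 0. 0 < y p \<and> 0 \<le> P p \<and> P p \<le> (y p ^ g + y p ^ G) * C"
  shows "ereal (real g * e)
    \<le> Liminf (at_right 0) (\<lambda>p. if P p = 0 then \<infinity> else ereal (ln (P p) / ln p))"
proof -
  define lower where "lower p = ln (2 * C) / ln p + real g * (ln (y p) / ln p)" for p
  have "((\<lambda>p. ln (2 * C) / ln p) \<longlongrightarrow> 0) (at_right 0)"
    using filterlim_mono[OF ln_at_0 at_bot_le_at_infinity order_refl]
    by (rule tendsto_divide_0[OF tendsto_const])
  then have "(lower \<longlongrightarrow> 0 + real g * e) (at_right 0)"
    unfolding lower_def[abs_def] by (intro tendsto_intros y)
  then have Liminf_lower: "Liminf (at_right 0) (\<lambda>p. ereal (lower p)) = ereal (real g * e)"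
    by (intro lim_imp_Liminf) simp_all
  have "\<forall>\<^sub>F p in at_right 0. e / 2 < ln (y p) / ln p"
    using y e by (intro order_tendstoD(1)) auto
  with P eventually_at_right_0_1
  have "\<forall>\<^sub>F p in at_right 0. ereal (lower p) \<le> (if P p = 0 then \<infinity> else ereal (ln (P p) / ln p))"
  proof eventually_elim
    case (elim p)
    have "0 < ln (y p) / ln p"
      using e elim by (meson half_gt_zero less_trans)
    moreover have "ln p < 0"
      using elim by simp
    ultimately have "ln (y p) < 0"
      by (simp add: zero_less_divide_iff)
    then have "y p ^ G \<le> y p ^ g"
      using elim \<open>g \<le> G\<close> by (intro power_decreasing) auto
    then have "(y p ^ g + y p ^ G) * C \<le> (2 * C) * y p ^ g"
      using C by (simp add: algebra_simps)
    then have "P p \<le> (2 * C) * y p ^ g"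
      using elim by linarith
    then show ?case
      using elim C ln_ratio_ge_of_le_power[of p "2 * C" "y p" "P p" g]
      by (auto simp: lower_def)
  qed
  from Liminf_mono[OF this] show ?thesis
    unfolding Liminf_lower .
qed

lemma tendsto_ln_max_ratio:
  fixes a b :: "real \<Rightarrow> real"
  assumes "((\<lambda>p. ln (a p) / - ln p) \<longlongrightarrow> \<alpha>) (at_right 0)"
    and "((\<lambda>p. ln (b p) / - ln p) \<longlongrightarrow> \<beta>) (at_right 0)"
    and "\<forall>\<^sub>F p in at_right 0. 0 < a p \<and> 0 < b p"
  shows "((\<lambda>p. ln (max (a p) (b p)) / - ln p) \<longlongrightarrow> max \<alpha> \<beta>) (at_right 0)"
proof -
  have "((\<lambda>p. max (ln (a p) / - ln p) (ln (b p) / - ln p)) \<longlongrightarrow> max \<alpha> \<beta>) (at_right 0)"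
    by (intro tendsto_max assms(1,2))
  moreover have "\<forall>\<^sub>F p in at_right 0.
      max (ln (a p) / - ln p) (ln (b p) / - ln p) = ln (max (a p) (b p)) / - ln p"
    using assms(3) eventually_at_right_0_1
  proof eventually_elim
    case (elim p)
    then have "ln (max (a p) (b p)) = max (ln (a p)) (ln (b p))"
      by (simp add: max_def)
    with elim show ?case
      by (simp add: max_divide_distrib_right)
  qed
  ultimately show ?thesis
    by (rule Lim_transform_eventually)
qed

lemma tendsto_ln_ratio_powr_mult:
  fixes L :: "real \<Rightarrow> real"
  assumes "((\<lambda>p. ln (L p) / - ln p) \<longlongrightarrow> m) (at_right 0)" "\<forall>\<^sub>F p in at_right 0. 0 < L p"
  shows "((\<lambda>p. ln (L p powr c * p) / ln p) \<longlongrightarrow> 1 - m * c) (at_right 0)"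
proof -
  have "((\<lambda>p. 1 - (ln (L p) / - ln p) * c) \<longlongrightarrow> 1 - m * c) (at_right 0)"
    by (intro tendsto_intros assms(1))
  moreover have "\<forall>\<^sub>F p in at_right 0. 1 - (ln (L p) / - ln p) * c = ln (L p powr c * p) / ln p"
    using assms(2) eventually_at_right_0_1
  proof eventually_elim
    case (elim p)
    then have "ln p \<noteq> 0"
      by simp
    with elim show ?case
      by (simp add: ln_mult ln_powr field_simps)
  qed
  ultimately show ?thesis
    by (rule Lim_transform_eventually)
qed

lemma eventually_ge_1_at_right:
  fixes N M :: "real \<Rightarrow> nat"
  assumes "filterlim N at_top (at_right 0)" "filterlim M at_top (at_right 0)"
  shows "\<forall>\<^sub>F p in at_right 0. 1 \<le> N p \<and> 1 \<le> M p"
proof -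
  have "\<forall>\<^sub>F p in at_right 0. 1 \<le> N p" "\<forall>\<^sub>F p in at_right 0. 1 \<le> M p"
    using assms by (simp_all add: filterlim_at_top)
  then show ?thesis
    by (rule eventually_conj)
qed

lemma eventually_span_prob_le_power_bound:
  fixes N M :: "real \<Rightarrow> nat" and k :: nat
  assumes "zero_set Z" "finite Z" "filterlim N at_top (at_right 0)" "filterlim M at_top (at_right 0)"
  defines "y \<equiv> \<lambda>p. max (real (N p)) (real (M p)) powr (1 + 1 / (real k + 1)) * p"
    and "g \<equiv> gamma (shift_diag Z k)" and "G \<equiv> gamma (shift_diag Z k) * Suc k"
  shows "\<forall>\<^sub>F p in at_right 0. 0 < y p \<and> 0 \<le> span_prob Z p (N p) (M p)
    \<and> span_prob Z p (N p) (M p) \<le> (y p ^ g + y p ^ G) * (2 ^ (G * G) * (real G + 1) ^ 2)"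
proof -
  from eventually_at_right_0_1 eventually_ge_1_at_right[OF assms(3,4)] show ?thesis
  proof eventually_elim
    case (elim p)
    let ?L = "max (real (N p)) (real (M p))"
    have "1 \<le> ?L" "real (N p) \<le> ?L" "real (M p) \<le> ?L"
      using elim by auto
    moreover have "0 < ?L powr (1 + 1 / (real k + 1)) * p"
      using elim \<open>1 \<le> ?L\<close> by simp
    ultimately show ?case
      using span_prob_le_power_bound[OF assms(1,2), where p = p and L = ?L and N = "N p"
          and M = "M p" and k = k] span_prob_nonneg[of p Z "N p" "M p"] elim
      by (simp add: y_def g_def G_def)
  qed
qed

theorem mainTheorem14:
  fixes Z :: "pt set" and k :: nat and \<alpha> \<beta> :: real
    and N M :: "real \<Rightarrow> nat"
  assumes "zero_set Z" and "finite Z"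
    and "0 \<le> \<alpha>" and "\<alpha> \<le> 1" and "0 \<le> \<beta>" and "\<beta> \<le> 1"
    and "filterlim N at_top (at_right 0)" and "filterlim M at_top (at_right 0)"
    and "((\<lambda>p. ln (real (N p)) / (- ln p)) \<longlongrightarrow> \<alpha>) (at_right 0)"
    and "((\<lambda>p. ln (real (M p)) / (- ln p)) \<longlongrightarrow> \<beta>) (at_right 0)"
  shows "Liminf (at_right 0) (\<lambda>p. rate_ratio Z p (N p) (M p))
           \<ge> ereal (real (gamma (shift_diag Z k)) * (1 - max \<alpha> \<beta> * (1 + 1 / (real k + 1))))"
proof -
  from eventually_ge_1_at_right[OF assms(7,8)]
  have lim: "((\<lambda>p. ln (max (real (N p)) (real (M p)) powr (1 + 1 / (real k + 1)) * p) / ln p)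
      \<longlongrightarrow> 1 - max \<alpha> \<beta> * (1 + 1 / (real k + 1))) (at_right 0)"
    by (intro tendsto_ln_ratio_powr_mult tendsto_ln_max_ratio assms(9,10)) (auto elim: eventually_mono)
  show ?thesis
  proof (cases "0 < 1 - max \<alpha> \<beta> * (1 + 1 / (real k + 1))")
    case True
    have "0 < (2 :: real) ^ n * (real m + 1) ^ 2" for n m
      by simp
    from Liminf_ln_ratio_ge[OF this True _ lim eventually_span_prob_le_power_bound[OF assms(1,2,7,8)]]
    show ?thesis
      by (simp add: rate_ratio_def)
  next
    case False
    then have "ereal (real (gamma (shift_diag Z k)) * (1 - max \<alpha> \<beta> * (1 + 1 / (real k + 1)))) \<le> 0"
      by (simp add: mult_nonneg_nonpos)
    from order_trans[OF this Liminf_rate_ratio_nonneg] show ?thesis .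
  qed
qed

end
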